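(* Let $P^1,\dots,P^4\in\mathbb{R}^n$ be in general position, let $Q^0$ be the equidistant point from $P^1,\dots,P^4$ with barycentric coordinate $\boldsymbol\lambda^0$, and suppose $\lambda^0_1<0$, $\lambda^0_2,\lambda^0_3,\lambda^0_4\ge0$. Let $Q^1=\pi(Q^0|L(P^2,P^3,P^4))$ with barycentric coordinate $\boldsymbol\lambda^1$ about $P^1,\dots,P^4$, and suppose $\lambda^1_2\ge0$, $\lambda^1_3\ge0$, $\lambda^1_4\ge0$. Then the center of the smallest enclosing circle of $P^1,\dots,P^4$ is $Q^\ast=Q^1$ and its radius is $d^\ast=d(P^2,Q^1)$.
   Context: $d$ is the Euclidean distance. Points are in general position if $P^2-P^1,\dots,P^m-P^1$ are linearly independent. $L(S^1,\dots,S^r)$ is the affine subspace spanned by the points; $\pi(Q'|L)$ is the orthogonal projection onto the affine subspace $L$. The barycentric coordinate of $Q\in L(P^1,\dots,P^m)$ is the unique $\boldsymbol\lambda$ with $\sum_i\lambda_i=1$, $Q=\sum_i\lambda_iP^i$. The equidistant point is the unique $Q^0\in L(P^1,\dots,P^m)$ with all $d(P^i,Q^0)$ equal. The smallest enclosing circle has center $Q^\ast$ attaining $\min_Q\max_i d(P^i,Q)$ and radius $d^\ast$ equal to this minimum. *)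

theory Defs
  imports "HOL-Analysis.Analysis"
begin

definition general_position4 :: "'a::euclidean_space \<Rightarrow> 'a \<Rightarrow> 'a \<Rightarrow> 'a \<Rightarrow> bool" where
  "general_position4 P1 P2 P3 P4 \<longleftrightarrow>
     (\<forall>c2 c3 c4::real. c2 *\<^sub>R (P2 - P1) + c3 *\<^sub>R (P3 - P1) + c4 *\<^sub>R (P4 - P1) = 0
        \<longrightarrow> c2 = 0 \<and> c3 = 0 \<and> c4 = 0)"

definition is_orth_proj :: "'a::euclidean_space set \<Rightarrow> 'a \<Rightarrow> 'a \<Rightarrow> bool" where
  "is_orth_proj L x q \<longleftrightarrow> q \<in> L \<and> (\<forall>y\<in>L. (x - q) \<bullet> (y - q) = 0)"

definition max_dist :: "'a::euclidean_space set \<Rightarrow> 'a \<Rightarrow> real" where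
  "max_dist S Q = Max ((\<lambda>p. dist p Q) ` S)"

definition is_sec_center :: "'a::euclidean_space set \<Rightarrow> 'a \<Rightarrow> bool" where
  "is_sec_center S Q \<longleftrightarrow> (\<forall>Q'. max_dist S Q \<le> max_dist S Q')"

definition sec_radius :: "'a::euclidean_space set \<Rightarrow> real" where
  "sec_radius S = (INF Q. max_dist S Q)"

end

theory Submission
  imports Defs
begin

text \<open>
  Projecting the equidistant point \<open>Q0\<close> orthogonally onto the plane of \<open>P2, P3, P4\<close>
  keeps these three points equidistant from \<open>Q1\<close> by Pythagoras, and since \<open>Q0\<close> lies on the
  far side of that plane from \<open>P1\<close> (\<open>\<lambda>\<^sup>0\<^sub>1 < 0\<close>), the projection moves strictly towards
  \<open>P1\<close>, so the circle about \<open>Q1\<close> through \<open>P2, P3, P4\<close> encloses \<open>P1\<close>. Minimality follows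
  from \<open>Q1\<close> lying in the convex hull of \<open>P2, P3, P4\<close>: for every \<open>Q\<close> the convex combination of
  the squared distances \<open>d(P\<^sub>i, Q)\<^sup>2\<close> with the weights of \<open>Q1\<close> equals \<open>r\<^sup>2 + d(Q, Q1)\<^sup>2\<close>
  with \<open>r = d(P2, Q1)\<close>, so
  some \<open>P\<^sub>i\<close> is at distance at least \<open>\<surd>(r\<^sup>2 + d(Q, Q1)\<^sup>2)\<close> from \<open>Q\<close>.
\<close>

lemma general_position4_coeff1_eq_0:
  fixes P1 P2 P3 P4 X :: "'a::euclidean_space"
  assumes gp: "general_position4 P1 P2 P3 P4"
    and a: "a2 + a3 + a4 = 1" "X = a2 *\<^sub>R P2 + a3 *\<^sub>R P3 + a4 *\<^sub>R P4"
    and b: "b1 + b2 + b3 + b4 = 1" "X = b1 *\<^sub>R P1 + b2 *\<^sub>R P2 + b3 *\<^sub>R P3 + b4 *\<^sub>R P4"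
  shows "b1 = 0"
proof -
  have a4: "a4 = 1 - a2 - a3" and b1: "b1 = 1 - b2 - b3 - b4" using a b by linarith+
  have "(a2-b2) *\<^sub>R (P2-P1) + (a3-b3) *\<^sub>R (P3-P1) + (a4-b4) *\<^sub>R (P4-P1)
     = (a2 *\<^sub>R P2 + a3 *\<^sub>R P3 + a4 *\<^sub>R P4) - (b1 *\<^sub>R P1 + b2 *\<^sub>R P2 + b3 *\<^sub>R P3 + b4 *\<^sub>R P4)"
    unfolding a4 b1 by (simp add: algebra_simps)
  also have "\<dots> = 0" using a b by simp
  finally have "a2 = b2 \<and> a3 = b3 \<and> a4 = b4" using gp unfolding general_position4_def by fastforce
  then show ?thesis using a b by linarith
qed

lemma norm_add_square:
  fixes x y :: "'a::real_inner"
  shows "(norm (x + y))\<^sup>2 = (norm x)\<^sup>2 + 2 * (x \<bullet> y) + (norm y)\<^sup>2"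
  by (simp add: power2_norm_eq_inner inner_add_left inner_add_right inner_commute)

lemma is_orth_proj_dist_square:
  assumes "is_orth_proj L x q" "y \<in> L"
  shows "(dist y x)\<^sup>2 = (dist y q)\<^sup>2 + (dist x q)\<^sup>2"
proof -
  have "(y - q) \<bullet> (q - x) = 0"
    using assms unfolding is_orth_proj_def by (metis inner_commute inner_minus_left minus_diff_eq)
  moreover have "(dist y x)\<^sup>2 = (dist y q)\<^sup>2 + 2 * ((y - q) \<bullet> (q - x)) + (dist x q)\<^sup>2"
    using norm_add_square[of "y - q" "q - x"] by (simp add: dist_norm norm_minus_commute)
  ultimately show ?thesis by simp
qed

text \<open>For \<open>a < 0\<close> the points \<open>p\<close> and \<open>x\<close> lie on opposite sides of \<open>L\<close>; the gap in the
  inequality is \<open>2 d(x, q)\<^sup>2 / a\<close>.\<close>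
lemma is_orth_proj_dist_square_less:
  assumes proj: "is_orth_proj L x q" and "x \<notin> L" "y \<in> L"
    and x: "x = a *\<^sub>R p + (1 - a) *\<^sub>R y" and "a < 0"
  shows "(dist p q)\<^sup>2 < (dist p x)\<^sup>2 - (dist x q)\<^sup>2"
proof -
  define d where "d = x - q"
  have "q \<in> L" and "d \<bullet> (y - q) = 0" using proj \<open>y \<in> L\<close> unfolding is_orth_proj_def d_def by auto
  have "d = a *\<^sub>R (p - q) + (1 - a) *\<^sub>R (y - q)"
    unfolding d_def x by (simp add: algebra_simps)
  from arg_cong[OF this, of "inner d"]
  have "d \<bullet> d = a * (d \<bullet> (p - q)) + (1 - a) * (d \<bullet> (y - q))"
    by (simp only: inner_add_right inner_scaleR_right)
  then have "d \<bullet> d = a * ((p - q) \<bullet> d)"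
    using \<open>d \<bullet> (y - q) = 0\<close> by (simp add: inner_commute)
  moreover have "d \<bullet> d > 0" using \<open>x \<notin> L\<close> \<open>q \<in> L\<close> unfolding d_def by auto
  ultimately have "(p - q) \<bullet> d < 0" using \<open>a < 0\<close> by (simp add: zero_less_mult_iff)
  have "(dist p q)\<^sup>2 = (norm ((p - x) + d))\<^sup>2" by (simp add: dist_norm d_def)
  also have "\<dots> = (dist p x)\<^sup>2 + 2 * ((p - x) \<bullet> d) + (dist x q)\<^sup>2"
    unfolding norm_add_square by (simp add: dist_norm d_def)
  also have "(p - x) \<bullet> d = (p - q) \<bullet> d - (dist x q)\<^sup>2"
    unfolding d_def by (simp add: dist_norm power2_norm_eq_inner inner_diff_left)
  finally show ?thesis using \<open>(p - q) \<bullet> d < 0\<close> by simp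
qed

lemma orth_proj_affine_hull_3_dist_square_less:
  fixes P1 P2 P3 P4 Q0 Q1 :: "'a::euclidean_space"
  assumes gp: "general_position4 P1 P2 P3 P4"
    and bc: "l1 + l2 + l3 + l4 = 1" "Q0 = l1 *\<^sub>R P1 + l2 *\<^sub>R P2 + l3 *\<^sub>R P3 + l4 *\<^sub>R P4"
    and "l1 < 0" and proj: "is_orth_proj (affine hull {P2, P3, P4}) Q0 Q1"
  shows "(dist P1 Q1)\<^sup>2 < (dist P1 Q0)\<^sup>2 - (dist Q0 Q1)\<^sup>2"
proof -
  let ?L = "affine hull {P2, P3, P4}"
  have "Q0 \<notin> ?L"
    using general_position4_coeff1_eq_0[OF gp _ _ bc] \<open>l1 < 0\<close> unfolding affine_hull_3 by fastforce
  define y where "y = (1 / (1 - l1)) *\<^sub>R (l2 *\<^sub>R P2 + l3 *\<^sub>R P3 + l4 *\<^sub>R P4)"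
  have "y \<in> ?L"
    unfolding affine_hull_3 y_def using bc(1) \<open>l1 < 0\<close>
    by (intro CollectI exI[of _ "l2 / (1 - l1)"] exI[of _ "l3 / (1 - l1)"] exI[of _ "l4 / (1 - l1)"])
       (auto simp: scaleR_add_right add_divide_distrib[symmetric])
  have "(1 - l1) *\<^sub>R y = l2 *\<^sub>R P2 + l3 *\<^sub>R P3 + l4 *\<^sub>R P4"
    using \<open>l1 < 0\<close> unfolding y_def by simp
  then have "Q0 = l1 *\<^sub>R P1 + (1 - l1) *\<^sub>R y"
    using bc(2) by (simp add: add.assoc)
  then show ?thesis
    using is_orth_proj_dist_square_less[OF proj \<open>Q0 \<notin> ?L\<close> \<open>y \<in> ?L\<close>] \<open>l1 < 0\<close> by blast
qed

text \<open>The parallel axis theorem for the barycenter \<open>c\<close> of the weights \<open>u\<close>.\<close>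
lemma sum_weighted_dist_square:
  fixes p :: "'i \<Rightarrow> 'a::real_inner"
  assumes "finite I" "sum u I = 1" "c = (\<Sum>i\<in>I. u i *\<^sub>R p i)"
  shows "(\<Sum>i\<in>I. u i * (dist (p i) q)\<^sup>2) = (\<Sum>i\<in>I. u i * (dist (p i) c)\<^sup>2) + (dist q c)\<^sup>2"
proof -
  have expand: "(dist (p i) q)\<^sup>2 = (dist (p i) c)\<^sup>2 + 2 * ((p i - c) \<bullet> (c - q)) + (dist q c)\<^sup>2" for i
    using norm_add_square[of "p i - c" "c - q"] by (simp add: dist_norm norm_minus_commute)
  have "(\<Sum>i\<in>I. u i *\<^sub>R (p i - c)) = c - sum u I *\<^sub>R c"
    using assms(3) by (simp add: scaleR_diff_right sum_subtractf scaleR_sum_left)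
  then have "(\<Sum>i\<in>I. u i *\<^sub>R (p i - c)) = 0" using assms(2) by simp
  then have centered: "(\<Sum>i\<in>I. u i * ((p i - c) \<bullet> (c - q))) = 0"
    by (metis (no_types, lifting) inner_sum_left inner_scaleR_left inner_zero_left sum.cong)
  have "(\<Sum>i\<in>I. u i * (dist (p i) q)\<^sup>2)
      = (\<Sum>i\<in>I. u i * (dist (p i) c)\<^sup>2) + 2 * (\<Sum>i\<in>I. u i * ((p i - c) \<bullet> (c - q)))
        + sum u I * (dist q c)\<^sup>2"
    by (simp add: expand ring_distribs sum.distrib sum_distrib_left sum_distrib_right mult.left_commute)
  then show ?thesis using centered assms(2) by simp
qed

lemma dist_le_max_dist:
  assumes "finite S" "p \<in> S"
  shows "dist p Q \<le> max_dist S Q"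
  unfolding max_dist_def using assms by (intro Max_ge) auto

lemma max_dist_square_ge:
  assumes "finite S" "T \<subseteq> S" "c \<in> convex hull T" "\<And>p. p \<in> T \<Longrightarrow> dist p c = r"
  shows "r\<^sup>2 + (dist Q c)\<^sup>2 \<le> (max_dist S Q)\<^sup>2"
proof -
  have "finite T" using assms(1,2) by (rule finite_subset[rotated])
  then obtain u where u: "\<forall>p\<in>T. 0 \<le> u p" "sum u T = 1" "(\<Sum>p\<in>T. u p *\<^sub>R p) = c"
    using assms(3) by (auto simp: convex_hull_finite)
  have "r\<^sup>2 + (dist Q c)\<^sup>2 = (\<Sum>p\<in>T. u p * (dist p Q)\<^sup>2)"
    using sum_weighted_dist_square[of T u c id Q] \<open>finite T\<close> u assms(4)
    by (simp add: sum_distrib_right[symmetric])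
  also have "\<dots> \<le> (\<Sum>p\<in>T. u p * (max_dist S Q)\<^sup>2)"
    using u(1) assms(2)
    by (intro sum_mono mult_left_mono power_mono) (auto intro: dist_le_max_dist[OF assms(1)])
  also have "\<dots> = (max_dist S Q)\<^sup>2" using u(2) by (simp add: sum_distrib_right[symmetric])
  finally show ?thesis .
qed

lemma sec_center_radius_eqI:
  assumes S: "finite S" "T \<subseteq> S" and c: "c \<in> convex hull T"
    and on_circle: "\<And>p. p \<in> T \<Longrightarrow> dist p c = r" and inside: "\<And>p. p \<in> S \<Longrightarrow> dist p c \<le> r"
  shows "(\<forall>Q. is_sec_center S Q \<longleftrightarrow> Q = c) \<and> sec_radius S = r"
proof -
  obtain p0 where "p0 \<in> T" using c by fastforce
  then have "p0 \<in> S" "r \<ge> 0" using S on_circle[of p0] by auto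
  have max_c: "max_dist S c = r"
    unfolding max_dist_def using S \<open>p0 \<in> T\<close> on_circle inside
    by (intro Max_eqI) (auto intro!: image_eqI[of r _ p0])
  have max_ge: "r\<^sup>2 + (dist Q c)\<^sup>2 \<le> (max_dist S Q)\<^sup>2" and max_nonneg: "max_dist S Q \<ge> 0" for Q
    using max_dist_square_ge[OF S c on_circle] dist_le_max_dist[OF S(1) \<open>p0 \<in> S\<close>, of Q]
    by (auto intro: order_trans[OF zero_le_dist])
  have le: "r \<le> max_dist S Q" for Q
  proof -
    have "r\<^sup>2 \<le> (max_dist S Q)\<^sup>2" using max_ge[of Q] zero_le_power2[of "dist Q c"] by linarith
    then show ?thesis using power2_le_imp_le max_nonneg by blast
  qed
  have less: "r < max_dist S Q" if "Q \<noteq> c" for Q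
  proof -
    have "(dist Q c)\<^sup>2 > 0" using that by simp
    then have "r\<^sup>2 < (max_dist S Q)\<^sup>2" using max_ge[of Q] by linarith
    then show ?thesis using power_less_imp_less_base max_nonneg by blast
  qed
  have "is_sec_center S Q \<longleftrightarrow> Q = c" for Q
  proof
    assume "is_sec_center S Q"
    then have "max_dist S Q \<le> r" using max_c unfolding is_sec_center_def by metis
    then show "Q = c" using less by force
  next
    assume "Q = c"
    then show "is_sec_center S Q" unfolding is_sec_center_def using max_c le by simp
  qed
  moreover have "sec_radius S = r"
    unfolding sec_radius_def using max_c le by (intro cInf_eq_minimum) (auto intro: rangeI[of _ c, simplified])
  ultimately show ?thesis by blast
qed

theorem theorem7:
  fixes P1 P2 P3 P4 Q0 Q1 :: "'a::euclidean_space"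
    and l01 l02 l03 l04 l11 l12 l13 l14 :: real
  assumes gp: "general_position4 P1 P2 P3 P4"
    and Q0_in: "Q0 \<in> affine hull {P1, P2, P3, P4}"
    and Q0_eq: "dist P1 Q0 = dist P2 Q0" "dist P1 Q0 = dist P3 Q0" "dist P1 Q0 = dist P4 Q0"
    and bc0: "l01 + l02 + l03 + l04 = 1"
      "Q0 = l01 *\<^sub>R P1 + l02 *\<^sub>R P2 + l03 *\<^sub>R P3 + l04 *\<^sub>R P4"
    and sign0: "l01 < 0" "l02 \<ge> 0" "l03 \<ge> 0" "l04 \<ge> 0"
    and Q1: "is_orth_proj (affine hull {P2, P3, P4}) Q0 Q1"
    and bc1: "l11 + l12 + l13 + l14 = 1"
      "Q1 = l11 *\<^sub>R P1 + l12 *\<^sub>R P2 + l13 *\<^sub>R P3 + l14 *\<^sub>R P4"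
    and sign1: "l12 \<ge> 0" "l13 \<ge> 0" "l14 \<ge> 0"
  shows "(\<forall>Q. is_sec_center {P1, P2, P3, P4} Q \<longleftrightarrow> Q = Q1)
         \<and> sec_radius {P1, P2, P3, P4} = dist P2 Q1"
proof -
  let ?L = "affine hull {P2, P3, P4}"
  obtain a2 a3 a4 where "a2 + a3 + a4 = 1" "Q1 = a2 *\<^sub>R P2 + a3 *\<^sub>R P3 + a4 *\<^sub>R P4"
    using Q1 unfolding is_orth_proj_def affine_hull_3 by auto
  from general_position4_coeff1_eq_0[OF gp this bc1] have "l11 = 0" .
  then have Q1_hull: "Q1 \<in> convex hull {P2, P3, P4}"
    using bc1 sign1 unfolding convex_hull_3 by auto
  have P1_closer: "(dist P1 Q1)\<^sup>2 < (dist P1 Q0)\<^sup>2 - (dist Q0 Q1)\<^sup>2"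
    using orth_proj_affine_hull_3_dist_square_less[OF gp bc0 sign0(1) Q1] .
  have on_circle: "(dist P Q1)\<^sup>2 = (dist P1 Q0)\<^sup>2 - (dist Q0 Q1)\<^sup>2" if "P \<in> {P2, P3, P4}" for P
  proof -
    have "dist P Q0 = dist P1 Q0" using that Q0_eq by auto
    moreover have "P \<in> ?L" using that by (auto intro: hull_inc)
    ultimately show ?thesis using is_orth_proj_dist_square[OF Q1] by force
  qed
  have equidistant: "dist P Q1 = dist P2 Q1" if "P \<in> {P2, P3, P4}" for P
  proof -
    have "(dist P Q1)\<^sup>2 = (dist P2 Q1)\<^sup>2" using on_circle[OF that] on_circle[of P2] by simp
    then show ?thesis by (rule power2_eq_iff_nonneg[THEN iffD1, OF zero_le_dist zero_le_dist])
  qed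
  have "(dist P1 Q1)\<^sup>2 \<le> (dist P2 Q1)\<^sup>2" using P1_closer on_circle[of P2] by simp
  then have "dist P1 Q1 \<le> dist P2 Q1" by (rule power2_le_imp_le[OF _ zero_le_dist])
  then have "dist P Q1 \<le> dist P2 Q1" if "P \<in> {P1, P2, P3, P4}" for P
    using that equidistant[of P] by auto
  moreover have "finite {P1, P2, P3, P4}" "{P2, P3, P4} \<subseteq> {P1, P2, P3, P4}" by auto
  ultimately show ?thesis
    using sec_center_radius_eqI[OF _ _ Q1_hull equidistant] by blast
qed

end
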